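(* Let $\dot G\in\mathcal C_1\cup\mathcal C_4\cup\mathcal C_5$ be a connected, non-complete, $5$-regular and $1$ net-regular SRSG with parameters $(n,5,a,b,c)$. If $(a,b)=(2,1)$, then $\dot G$ is isomorphic to $\dot S^1_{12}$, which has parameters $(12,5,2,1,-2)$.
   Context: A signed graph $\dot G=(G,\sigma)$ is a simple graph $G$ with $\sigma:E(G)\to\{\pm1\}$; adjacency matrix $A_{\dot G}$ has entries $\sigma(v_iv_j)$ for adjacent vertices and $0$ otherwise. Degree and connectedness refer to $G$; net-degree is $d^+(v)-d^-(v)$; $\rho$ net-regular means all net-degrees equal $\rho$. $\dot G$ on $n$ vertices is an SRSG if it is neither homogeneous complete nor edgeless and there are $r\in\mathbb N$, $a,b,c\in\mathbb Z$ with $(A^2_{\dot G})_{ii}=r$, $(A^2_{\dot G})_{ij}=a$ for positive edges, $b$ for negative edges, $c$ for distinct non-adjacent pairs; parameters $(n,r,a,b,c)$. Classes: $\mathcal C_1$: $a=-b$ and (complete, or non-complete with $c\neq0$); $\mathcal C_4$: $a\ne-b$, non-complete, $c=0$; $\mathcal C_5$: $a\neq-b$, non-complete, $c\notin\{0,\frac{a+b}{2}\}$. $\dot S^1_{12}$ has vertex set $\{(s,t):s\in\{1,2,3,4\},t\in\{1,2,3\}\}$, positive edges $(s,t)(s',t)$ for $s\ne s'$, negative edges $(s,t)(s,t')$ for $t\ne t'$, and no other edges. *)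

theory Defs
  imports Main
begin

text \<open>A signed graph on a finite vertex set V is represented by its adjacency
  function A: A x y \<in> {-1,0,1}, symmetric, zero diagonal, zero outside V.
  x,y adjacent iff A x y \<noteq> 0; the sign of the edge xy is A x y.\<close>

definition signed_graph :: "'a set \<Rightarrow> ('a \<Rightarrow> 'a \<Rightarrow> int) \<Rightarrow> bool" where
  "signed_graph V A \<longleftrightarrow> finite V
     \<and> (\<forall>x y. A x y \<in> {-1, 0, 1})
     \<and> (\<forall>x y. A x y = A y x)
     \<and> (\<forall>x. A x x = 0)
     \<and> (\<forall>x y. (x \<notin> V \<or> y \<notin> V) \<longrightarrow> A x y = 0)"

definition adj2 :: "'a set \<Rightarrow> ('a \<Rightarrow> 'a \<Rightarrow> int) \<Rightarrow> 'a \<Rightarrow> 'a \<Rightarrow> int" where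
  "adj2 V A x y = (\<Sum>z\<in>V. A x z * A z y)"

definition sg_complete :: "'a set \<Rightarrow> ('a \<Rightarrow> 'a \<Rightarrow> int) \<Rightarrow> bool" where
  "sg_complete V A \<longleftrightarrow> (\<forall>x\<in>V. \<forall>y\<in>V. x \<noteq> y \<longrightarrow> A x y \<noteq> 0)"

definition homogeneous_complete :: "'a set \<Rightarrow> ('a \<Rightarrow> 'a \<Rightarrow> int) \<Rightarrow> bool" where
  "homogeneous_complete V A \<longleftrightarrow>
     (\<forall>x\<in>V. \<forall>y\<in>V. x \<noteq> y \<longrightarrow> A x y = 1) \<or> (\<forall>x\<in>V. \<forall>y\<in>V. x \<noteq> y \<longrightarrow> A x y = -1)"

definition edgeless :: "'a set \<Rightarrow> ('a \<Rightarrow> 'a \<Rightarrow> int) \<Rightarrow> bool" where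
  "edgeless V A \<longleftrightarrow> (\<forall>x\<in>V. \<forall>y\<in>V. A x y = 0)"

definition SRSG :: "'a set \<Rightarrow> ('a \<Rightarrow> 'a \<Rightarrow> int) \<Rightarrow> nat \<Rightarrow> nat \<Rightarrow> int \<Rightarrow> int \<Rightarrow> int \<Rightarrow> bool" where
  "SRSG V A n r a b c \<longleftrightarrow> signed_graph V A \<and> card V = n
     \<and> \<not> homogeneous_complete V A \<and> \<not> edgeless V A
     \<and> (\<forall>x\<in>V. adj2 V A x x = int r)
     \<and> (\<forall>x\<in>V. \<forall>y\<in>V. A x y = 1 \<longrightarrow> adj2 V A x y = a)
     \<and> (\<forall>x\<in>V. \<forall>y\<in>V. A x y = -1 \<longrightarrow> adj2 V A x y = b)
     \<and> (\<forall>x\<in>V. \<forall>y\<in>V. x \<noteq> y \<and> A x y = 0 \<longrightarrow> adj2 V A x y = c)"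

definition class_C1 :: "'a set \<Rightarrow> ('a \<Rightarrow> 'a \<Rightarrow> int) \<Rightarrow> int \<Rightarrow> int \<Rightarrow> int \<Rightarrow> bool" where
  "class_C1 V A a b c \<longleftrightarrow> a = - b \<and> (sg_complete V A \<or> (\<not> sg_complete V A \<and> c \<noteq> 0))"

definition class_C4 :: "'a set \<Rightarrow> ('a \<Rightarrow> 'a \<Rightarrow> int) \<Rightarrow> int \<Rightarrow> int \<Rightarrow> int \<Rightarrow> bool" where
  "class_C4 V A a b c \<longleftrightarrow> a \<noteq> - b \<and> \<not> sg_complete V A \<and> c = 0"

text \<open>c \<noteq> (a+b)/2 is written as 2c \<noteq> a+b.\<close>
definition class_C5 :: "'a set \<Rightarrow> ('a \<Rightarrow> 'a \<Rightarrow> int) \<Rightarrow> int \<Rightarrow> int \<Rightarrow> int \<Rightarrow> bool" where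
  "class_C5 V A a b c \<longleftrightarrow> a \<noteq> - b \<and> \<not> sg_complete V A \<and> c \<noteq> 0 \<and> 2 * c \<noteq> a + b"

definition sg_connected :: "'a set \<Rightarrow> ('a \<Rightarrow> 'a \<Rightarrow> int) \<Rightarrow> bool" where
  "sg_connected V A \<longleftrightarrow> (\<forall>x\<in>V. \<forall>y\<in>V. (\<lambda>u v. A u v \<noteq> 0)\<^sup>*\<^sup>* x y)"

definition degree :: "'a set \<Rightarrow> ('a \<Rightarrow> 'a \<Rightarrow> int) \<Rightarrow> 'a \<Rightarrow> nat" where
  "degree V A x = card {y\<in>V. A x y \<noteq> 0}"

definition net_degree :: "'a set \<Rightarrow> ('a \<Rightarrow> 'a \<Rightarrow> int) \<Rightarrow> 'a \<Rightarrow> int" where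
  "net_degree V A x = int (card {y\<in>V. A x y = 1}) - int (card {y\<in>V. A x y = -1})"

definition regular :: "'a set \<Rightarrow> ('a \<Rightarrow> 'a \<Rightarrow> int) \<Rightarrow> nat \<Rightarrow> bool" where
  "regular V A k \<longleftrightarrow> (\<forall>x\<in>V. degree V A x = k)"

definition net_regular :: "'a set \<Rightarrow> ('a \<Rightarrow> 'a \<Rightarrow> int) \<Rightarrow> int \<Rightarrow> bool" where
  "net_regular V A \<rho> \<longleftrightarrow> (\<forall>x\<in>V. net_degree V A x = \<rho>)"

definition sg_isomorphic :: "'a set \<Rightarrow> ('a \<Rightarrow> 'a \<Rightarrow> int) \<Rightarrow> 'b set \<Rightarrow> ('b \<Rightarrow> 'b \<Rightarrow> int) \<Rightarrow> bool" where
  "sg_isomorphic V A W B \<longleftrightarrow>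
     (\<exists>f. bij_betw f V W \<and> (\<forall>x\<in>V. \<forall>y\<in>V. B (f x) (f y) = A x y))"

definition S12_V :: "(nat \<times> nat) set" where
  "S12_V = {1..4} \<times> {1..3}"

definition S12_A :: "nat \<times> nat \<Rightarrow> nat \<times> nat \<Rightarrow> int" where
  "S12_A u v = (if u \<in> S12_V \<and> v \<in> S12_V then
       (if snd u = snd v \<and> fst u \<noteq> fst v then 1
        else if fst u = fst v \<and> snd u \<noteq> snd v then -1 else 0)
     else 0)"

end

(* Each vertex has 3 positive and 2 negative neighbours, and with a = 2, b = 1 a double count
   of the 2-walks leaving a vertex is tight: every 2-walk between adjacent vertices is positive
   and every 2-walk between distinct non-adjacent vertices is negative.  Hence "equal or joined
   by a positive (negative) edge" is an equivalence relation whose classes are positive 4-cliques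
   (negative 3-cliques), and a positive and a negative class meet in at most one vertex.  So 12
   divides n, while summing a row of A^2 gives c (n - 6) = -12; thus n = 12, and sending a vertex
   to its pair of classes is an isomorphism onto S^1_12. *)

theory Submission
  imports Defs
begin

lemma card_eq_mult_card_quotient:
  assumes "finite A" and "equiv A r" and "\<And>X. X \<in> A // r \<Longrightarrow> card X = k"
  shows "card A = k * card (A // r)"
proof -
  have "finite (A // r)"
    using assms(1,2) by (simp add: finite_quotient equiv_type)
  then have "k * card (A // r) = card (\<Union> (A // r))"
    using assms by (intro card_partition) (auto simp: Union_quotient dest: quotient_disj)
  then show ?thesis
    using assms(2) by (simp add: Union_quotient)
qed

lemma bij_betw_class_pair:
  assumes "finite V" and "equiv V P" and "equiv V N" and "P \<inter> N \<subseteq> Id"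
    and "card V = card (V // N) * card (V // P)"
  shows "bij_betw (\<lambda>v. (N `` {v}, P `` {v})) V (V // N \<times> V // P)"
proof -
  let ?f = "\<lambda>v. (N `` {v}, P `` {v})"
  have inj: "inj_on ?f V"
  proof (rule inj_onI)
    fix v w assume "v \<in> V" "w \<in> V" "?f v = ?f w"
    then have "(v, w) \<in> P \<inter> N"
      using assms(2,3) by (simp add: eq_equiv_class_iff)
    then show "v = w"
      using assms(4) by blast
  qed
  have "finite (V // N \<times> V // P)"
    using assms(1-3) by (simp add: finite_quotient equiv_type)
  moreover have "?f ` V \<subseteq> V // N \<times> V // P"
    by (auto intro: quotientI)
  ultimately have "?f ` V = V // N \<times> V // P"
    using inj assms(5) by (intro card_subset_eq) (simp_all add: card_image card_cartesian_product)
  with inj show ?thesis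
    by (simp add: bij_betw_def)
qed

lemma bij_betw_class_eq_iff:
  assumes "bij_betw g (V // R) X" and "equiv V R" and "v \<in> V" and "w \<in> V"
  shows "g (R `` {v}) = g (R `` {w}) \<longleftrightarrow> (v, w) \<in> R"
proof -
  have "inj_on g (V // R)"
    using assms(1) by (rule bij_betw_imp_inj_on)
  then have "g (R `` {v}) = g (R `` {w}) \<longleftrightarrow> R `` {v} = R `` {w}"
    using assms(3,4) by (simp add: inj_on_eq_iff quotientI)
  also have "\<dots> \<longleftrightarrow> (v, w) \<in> R"
    using assms(2-4) by (rule eq_equiv_class_iff)
  finally show ?thesis .
qed

lemma nat_eq_12_of_dvd:
  fixes n :: nat and c :: int
  assumes "4 dvd n" and "3 dvd n" and "n > 0" and "c * (int n - 6) = -12"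
  shows "n = 12"
proof -
  have "12 dvd n"
    using assms(1,2) by presburger
  then have "n \<ge> 12"
    using assms(3) by (simp add: dvd_imp_le)
  have "int n - 6 dvd 12"
    using assms(4) by (metis dvdI minus_equation_iff mult.commute mult_minus_left)
  then have "n \<le> 18"
    using zdvd_imp_le by fastforce
  with \<open>n \<ge> 12\<close> \<open>12 dvd n\<close> show ?thesis
    by presburger
qed

locale sgraph =
  fixes V :: "'a set" and A :: "'a \<Rightarrow> 'a \<Rightarrow> int"
  assumes signed_graph: "signed_graph V A"
begin

lemma finite_V: "finite V"
  using signed_graph unfolding signed_graph_def by blast

lemma A_cases: "A x y = -1 \<or> A x y = 0 \<or> A x y = 1"
  using signed_graph unfolding signed_graph_def by blast

lemma A_sym: "A x y = A y x"
  using signed_graph unfolding signed_graph_def by blast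

lemma A_diag [simp]: "A x x = 0"
  using signed_graph unfolding signed_graph_def by blast

lemma A_outside: "x \<notin> V \<or> y \<notin> V \<Longrightarrow> A x y = 0"
  using signed_graph unfolding signed_graph_def by blast

lemma A_square: "A x y * A x y = \<bar>A x y\<bar>"
  using A_cases[of x y] by auto

lemma sum_if_const: "(\<Sum>y\<in>V. if P y then k else 0) = k * int (card {y\<in>V. P y})"
  using finite_V by (simp add: sum.inter_filter[symmetric])

lemma sum_fun_A_row:
  assumes "g 0 = 0"
  shows "(\<Sum>y\<in>V. g (A x y)) =
    g 1 * int (card {y\<in>V. A x y = 1}) + g (-1) * int (card {y\<in>V. A x y = -1})"
proof -
  have "(\<Sum>y\<in>V. g (A x y)) =
      (\<Sum>y\<in>V. (if A x y = 1 then g 1 else 0) + (if A x y = -1 then g (-1) else 0))"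
    by (intro sum.cong refl) (use A_cases[of x] assms in fastforce)
  then show ?thesis
    by (simp only: sum.distrib sum_if_const)
qed

lemma sum_A_row: "(\<Sum>y\<in>V. A x y) = net_degree V A x"
  using sum_fun_A_row[of id x] unfolding net_degree_def by simp

lemma degree_eq: "degree V A x = card {y\<in>V. A x y = 1} + card {y\<in>V. A x y = -1}"
proof -
  have "{y\<in>V. A x y \<noteq> 0} = {y\<in>V. A x y = 1} \<union> {y\<in>V. A x y = -1}"
    using A_cases by auto
  then show ?thesis
    unfolding degree_def using finite_V by (simp add: card_Un_disjoint disjoint_iff)
qed

lemma card_pos_neg_eq:
  assumes "degree V A x = p + m" and "net_degree V A x = int p - int m"
  shows "card {y\<in>V. A x y = 1} = p" and "card {y\<in>V. A x y = -1} = m"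
  using assms unfolding degree_eq net_degree_def by linarith+

lemma sum_abs_A_row: "(\<Sum>y\<in>V. \<bar>A x y\<bar>) = int (degree V A x)"
  using sum_fun_A_row[of abs x] unfolding degree_eq by simp

lemma adj2_diag: "adj2 V A x x = int (degree V A x)"
proof -
  have "A x z * A z x = \<bar>A x z\<bar>" for z
    using A_square A_sym[of x z] by simp
  then show ?thesis
    unfolding adj2_def by (simp add: sum_abs_A_row)
qed

lemma sum_adj2_row: "(\<Sum>y\<in>V. adj2 V A x y) = (\<Sum>z\<in>V. A x z * (\<Sum>y\<in>V. A z y))"
  unfolding adj2_def sum_distrib_left by (rule sum.swap)

definition sign_rel :: "int \<Rightarrow> ('a \<times> 'a) set" where
  "sign_rel s = {(v, w). v \<in> V \<and> w \<in> V \<and> (v = w \<or> A v w = s)}"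

lemma sign_rel_class: "v \<in> V \<Longrightarrow> sign_rel s `` {v} = insert v {w\<in>V. A v w = s}"
  unfolding sign_rel_def by auto

lemma sign_rel_inter: "sign_rel 1 \<inter> sign_rel (-1) \<subseteq> Id"
  unfolding sign_rel_def by auto

end

(* The values a = p - 1 and b = m - 1 are
   extremal: they force the closed positive and the closed negative neighbourhoods to be cliques,
   so that the graph is a signed rook's graph. *)
locale srsg_rook = sgraph +
  fixes p m :: nat and c :: int
  assumes card_pos: "x \<in> V \<Longrightarrow> card {y\<in>V. A x y = 1} = p"
    and card_neg: "x \<in> V \<Longrightarrow> card {y\<in>V. A x y = -1} = m"
    and adj2_pos: "x \<in> V \<Longrightarrow> y \<in> V \<Longrightarrow> A x y = 1 \<Longrightarrow> adj2 V A x y = int p - 1"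
    and adj2_neg: "x \<in> V \<Longrightarrow> y \<in> V \<Longrightarrow> A x y = -1 \<Longrightarrow> adj2 V A x y = int m - 1"
    and adj2_nonadj: "x \<in> V \<Longrightarrow> y \<in> V \<Longrightarrow> x \<noteq> y \<Longrightarrow> A x y = 0 \<Longrightarrow> adj2 V A x y = c"
begin

lemma degree_rook: "x \<in> V \<Longrightarrow> degree V A x = p + m"
  by (simp add: degree_eq card_pos card_neg)

lemma sum_A_row_rook: "x \<in> V \<Longrightarrow> (\<Sum>y\<in>V. A x y) = int p - int m"
  by (simp add: sum_A_row net_degree_def card_pos card_neg)

lemma sum_adj2_row_rook:
  assumes "x \<in> V"
  shows "(\<Sum>y\<in>V. adj2 V A x y) = (int p - int m)\<^sup>2"
proof -
  have "(\<Sum>y\<in>V. adj2 V A x y) = (\<Sum>z\<in>V. A x z * (int p - int m))"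
    unfolding sum_adj2_row by (intro sum.cong refl) (simp add: sum_A_row_rook)
  also have "\<dots> = (int p - int m) * (int p - int m)"
    using assms by (simp add: sum_distrib_right[symmetric] sum_A_row_rook)
  finally show ?thesis
    by (simp add: power2_eq_square)
qed

lemma sum_adj2_adjacent:
  assumes "x \<in> V"
  shows "(\<Sum>y\<in>V. if A x y = 0 then 0 else adj2 V A x y) = int p * (int p - 1) + int m * (int m - 1)"
proof -
  have "(\<Sum>y\<in>V. if A x y = 0 then 0 else adj2 V A x y) =
      (\<Sum>y\<in>V. (if A x y = 1 then int p - 1 else 0) + (if A x y = -1 then int m - 1 else 0))"
    by (intro sum.cong refl) (use A_cases[of x] assms adj2_pos adj2_neg in fastforce)
  then show ?thesis
    using assms by (simp only: sum.distrib sum_if_const card_pos card_neg) (simp add: mult.commute)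
qed

lemma sum_abs_two_walks:
  assumes x: "x \<in> V"
  shows "(\<Sum>y\<in>V - {x}. \<Sum>z\<in>V. \<bar>A x z * A z y\<bar>) = int (p + m) * (int (p + m) - 1)"
proof -
  have row: "(\<Sum>y\<in>V - {x}. \<bar>A z y\<bar>) = int (p + m) - \<bar>A x z\<bar>" if "z \<in> V" for z
    using that x finite_V by (simp add: sum_diff1 sum_abs_A_row degree_rook A_sym[of z x])
  have "(\<Sum>y\<in>V - {x}. \<Sum>z\<in>V. \<bar>A x z * A z y\<bar>) = (\<Sum>z\<in>V. \<bar>A x z\<bar> * (\<Sum>y\<in>V - {x}. \<bar>A z y\<bar>))"
    by (subst sum.swap) (simp add: abs_mult sum_distrib_left)
  also have "\<dots> = (\<Sum>z\<in>V. int (p + m) * \<bar>A x z\<bar> - \<bar>A x z\<bar>)"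
    by (intro sum.cong refl) (simp add: row right_diff_distrib A_square mult.commute)
  also have "\<dots> = int (p + m) * int (p + m) - int (p + m)"
    using x by (simp add: sum_subtractf sum_distrib_left[symmetric] sum_abs_A_row degree_rook)
  finally show ?thesis
    by (simp add: algebra_simps)
qed

lemma sum_signed_adj2:
  assumes x: "x \<in> V"
  shows "(\<Sum>y\<in>V - {x}. (if A x y = 0 then -1 else 1) * adj2 V A x y) = int (p + m) * (int (p + m) - 1)"
proof -
  have adjacent: "(\<Sum>y\<in>V - {x}. if A x y = 0 then 0 else adj2 V A x y) =
      int p * (int p - 1) + int m * (int m - 1)"
    using x finite_V by (simp add: sum_diff1 sum_adj2_adjacent)
  have all: "(\<Sum>y\<in>V - {x}. adj2 V A x y) = (int p - int m)\<^sup>2 - int (p + m)"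
    using x finite_V by (simp add: sum_diff1 sum_adj2_row_rook adj2_diag degree_rook)
  have "(\<Sum>y\<in>V - {x}. (if A x y = 0 then -1 else 1) * adj2 V A x y) =
      (\<Sum>y\<in>V - {x}. 2 * (if A x y = 0 then 0 else adj2 V A x y) - adj2 V A x y)"
    by (intro sum.cong refl) simp
  also have "\<dots> = 2 * (int p * (int p - 1) + int m * (int m - 1)) - ((int p - int m)\<^sup>2 - int (p + m))"
    by (simp add: sum_subtractf sum_distrib_left[symmetric] adjacent all)
  finally show ?thesis
    by (simp add: power2_eq_square algebra_simps)
qed

(* The two sums above agree, and each term of the first dominates the corresponding signed term
   of the second, so every 2-walk from x to y has sign 1 or -1 according as y is or is not
   adjacent to x. *)
lemma two_walk_sign:
  assumes x: "x \<in> V" and y: "y \<in> V" and "x \<noteq> y" and "A x z \<noteq> 0" and "A z y \<noteq> 0"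
  shows "A x z * A z y = (if A x y = 0 then -1 else 1)"
proof -
  define s where "s y = (if A x y = 0 then -1 else (1::int))" for y
  define D where "D y z = \<bar>A x z * A z y\<bar> - s y * (A x z * A z y)" for y z
  have D_nonneg: "D y z \<ge> 0" for y z
    by (simp add: D_def s_def abs_ge_self abs_ge_minus_self)
  have "(\<Sum>y\<in>V - {x}. \<Sum>z\<in>V. D y z) =
      (\<Sum>y\<in>V - {x}. \<Sum>z\<in>V. \<bar>A x z * A z y\<bar>) - (\<Sum>y\<in>V - {x}. s y * adj2 V A x y)"
    unfolding D_def adj2_def by (simp add: sum_subtractf sum_distrib_left mult.assoc)
  also have "\<dots> = 0"
    using sum_abs_two_walks[OF x] sum_signed_adj2[OF x] by (simp add: s_def)
  finally have "(\<Sum>y\<in>V - {x}. \<Sum>z\<in>V. D y z) = 0" .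
  moreover have "y \<in> V - {x}" and "z \<in> V"
    using assms A_outside by auto
  ultimately have "D y z = 0"
    using finite_V D_nonneg by (simp add: sum_nonneg_eq_0_iff sum_nonneg)
  then show ?thesis
    using A_cases[of x z] A_cases[of z y] assms(4,5) by (auto simp: D_def s_def split: if_splits)
qed

lemma sign_clique:
  assumes "s = 1 \<or> s = -1" and "A z x = s" and "A z y = s" and "x \<noteq> y"
  shows "A x y = s"
proof -
  have "A z x \<noteq> 0" "A z y \<noteq> 0"
    using assms by auto
  then have V: "x \<in> V" "y \<in> V" "z \<in> V" and "z \<noteq> y"
    using A_outside by auto
  have "A x y \<noteq> 0"
    using two_walk_sign[of x y z] V assms A_sym[of z x] by auto
  then have "A z x * A x y = 1"
    using two_walk_sign[of z y x] V \<open>z \<noteq> y\<close> \<open>A z x \<noteq> 0\<close> \<open>A z y \<noteq> 0\<close> by simp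
  then show ?thesis
    using assms(1,2) by auto
qed

lemma equiv_sign_rel:
  assumes "s = 1 \<or> s = -1"
  shows "equiv V (sign_rel s)"
proof (rule equivI)
  show "sign_rel s \<subseteq> V \<times> V" and "refl_on V (sign_rel s)" and "sym (sign_rel s)"
    unfolding sign_rel_def by (auto intro: refl_onI symI simp: A_sym)
  show "trans (sign_rel s)"
  proof (rule transI)
    fix u v w assume "(u, v) \<in> sign_rel s" and "(v, w) \<in> sign_rel s"
    moreover have "A u w = s" if "A u v = s" "A v w = s" "u \<noteq> w"
      using sign_clique[of s v u w] assms that A_sym[of u v] by simp
    ultimately show "(u, w) \<in> sign_rel s"
      unfolding sign_rel_def by auto
  qed
qed

lemma card_sign_class:
  assumes "v \<in> V"
  shows "card (sign_rel 1 `` {v}) = p + 1" and "card (sign_rel (-1) `` {v}) = m + 1"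
  using assms finite_V by (simp_all add: sign_rel_class card_pos card_neg)

lemma card_V_eq_mult_classes:
  shows "card V = (p + 1) * card (V // sign_rel 1)"
    and "card V = (m + 1) * card (V // sign_rel (-1))"
  by (rule card_eq_mult_card_quotient[OF finite_V equiv_sign_rel];
      auto elim!: quotientE simp: card_sign_class)+

lemma c_equation:
  assumes x: "x \<in> V"
  shows "c * (int (card V) - int (p + m) - 1) = - 2 * int p * int m"
proof -
  have "adj2 V A x y = c + (if y = x then int (p + m) - c else 0)
      + (if A x y = 1 then int p - 1 - c else 0) + (if A x y = -1 then int m - 1 - c else 0)"
    if y: "y \<in> V" for y
  proof (cases "y = x")
    case True
    then show ?thesis
      using x by (simp add: adj2_diag degree_rook)
  next
    case False
    then show ?thesis
      using A_cases[of x y] x y by (auto simp: adj2_pos adj2_neg adj2_nonadj)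
  qed
  then have "(\<Sum>y\<in>V. adj2 V A x y) =
      c * int (card V) + (int (p + m) - c) * int (card {y\<in>V. y = x})
      + (int p - 1 - c) * int p + (int m - 1 - c) * int m"
    using x by (simp add: sum.distrib sum_if_const card_pos card_neg)
  moreover have "{y\<in>V. y = x} = {x}"
    using x by auto
  ultimately show ?thesis
    using sum_adj2_row_rook[OF x] by (simp add: power2_eq_square algebra_simps)
qed

lemma card_V_eq_12:
  assumes "p = 3" and "m = 2" and "V \<noteq> {}"
  shows "card V = 12"
proof -
  obtain x where x: "x \<in> V"
    using assms(3) by blast
  show ?thesis
  proof (rule nat_eq_12_of_dvd)
    have "card V = 4 * card (V // sign_rel 1)" and "card V = 3 * card (V // sign_rel (-1))"
      using card_V_eq_mult_classes assms(1,2) by simp_all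
    then show "4 dvd card V" and "3 dvd card V"
      by (metis dvd_triv_left)+
    show "card V > 0"
      using x finite_V card_gt_0_iff by blast
    show "c * (int (card V) - 6) = -12"
      using c_equation[OF x] assms(1,2) by simp
  qed
qed

lemma sg_isomorphic_S12:
  assumes "p = 3" and "m = 2" and "V \<noteq> {}"
  shows "sg_isomorphic V A S12_V S12_A"
proof -
  let ?P = "sign_rel 1" and ?N = "sign_rel (-1)"
  have equiv: "equiv V ?P" "equiv V ?N"
    by (simp_all add: equiv_sign_rel)
  have cards: "card (V // ?P) = 3" "card (V // ?N) = 4"
    using card_V_eq_12[OF assms] card_V_eq_mult_classes assms(1,2) by simp_all
  have "finite (V // ?P)" "finite (V // ?N)"
    using equiv finite_V by (simp_all add: finite_quotient equiv_type)
  then obtain gP gN where gP: "bij_betw gP (V // ?P) {1..3::nat}"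
    and gN: "bij_betw gN (V // ?N) {1..4::nat}"
    using finite_same_card_bij[of "V // ?P" "{1..3::nat}"] finite_same_card_bij[of "V // ?N" "{1..4::nat}"]
      cards by auto
  define f where "f = map_prod gN gP \<circ> (\<lambda>v. (?N `` {v}, ?P `` {v}))"
  have bij: "bij_betw f V S12_V"
    unfolding f_def S12_V_def
  proof (rule bij_betw_trans[OF bij_betw_class_pair bij_betw_map_prod[OF gN gP]])
    show "card V = card (V // ?N) * card (V // ?P)"
      using card_V_eq_12[OF assms] cards by simp
  qed (use equiv finite_V sign_rel_inter in auto)
  have "S12_A (f v) (f w) = A v w" if vw: "v \<in> V" "w \<in> V" for v w
  proof -
    have "f v \<in> S12_V" "f w \<in> S12_V"
      using bij vw by (simp_all add: bij_betw_apply)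
    moreover have "fst (f v) = fst (f w) \<longleftrightarrow> v = w \<or> A v w = -1"
      using bij_betw_class_eq_iff[OF gN equiv(2) vw] vw by (simp add: f_def sign_rel_def)
    moreover have "snd (f v) = snd (f w) \<longleftrightarrow> v = w \<or> A v w = 1"
      using bij_betw_class_eq_iff[OF gP equiv(1) vw] vw by (simp add: f_def sign_rel_def)
    ultimately show ?thesis
      using A_cases[of v w] unfolding S12_A_def by (cases "v = w") auto
  qed
  with bij show ?thesis
    unfolding sg_isomorphic_def by blast
qed

end

lemma S12_A_sym: "S12_A x y = S12_A y x"
proof -
  have "(snd x = snd y \<and> fst x \<noteq> fst y) = (snd y = snd x \<and> fst y \<noteq> fst x)"
    and "(fst x = fst y \<and> snd x \<noteq> snd y) = (fst y = fst x \<and> snd y \<noteq> snd x)"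
    and "(x \<in> S12_V \<and> y \<in> S12_V) = (y \<in> S12_V \<and> x \<in> S12_V)"
    by auto
  then show ?thesis
    unfolding S12_A_def by (simp only:)
qed

lemma signed_graph_S12: "signed_graph S12_V S12_A"
  unfolding signed_graph_def
proof (intro conjI allI impI)
  show "finite S12_V"
    unfolding S12_V_def by simp
  fix x y
  show "S12_A x y \<in> {-1, 0, 1}" and "S12_A x x = 0"
    unfolding S12_A_def by simp_all
  show "S12_A x y = S12_A y x"
    by (rule S12_A_sym)
  show "x \<notin> S12_V \<or> y \<notin> S12_V \<Longrightarrow> S12_A x y = 0"
    unfolding S12_A_def by (simp only: de_Morgan_conj[symmetric] if_False)
qed

lemma SRSG_S12: "SRSG S12_V S12_A 12 5 2 1 (-2)"
  unfolding SRSG_def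
proof (intro conjI)
  show "signed_graph S12_V S12_A"
    by (rule signed_graph_S12)
qed (unfold homogeneous_complete_def edgeless_def adj2_def S12_A_def S12_V_def; code_simp)+

theorem lemma3p5:
  fixes V :: "'a set" and A :: "'a \<Rightarrow> 'a \<Rightarrow> int"
    and n :: nat and a b c :: int
  assumes "SRSG V A n 5 a b c"
    and "class_C1 V A a b c \<or> class_C4 V A a b c \<or> class_C5 V A a b c"
    and "sg_connected V A"
    and "\<not> sg_complete V A"
    and "regular V A 5"
    and "net_regular V A 1"
    and "(a, b) = (2, 1)"
  shows "sg_isomorphic V A S12_V S12_A \<and> SRSG S12_V S12_A 12 5 2 1 (-2)"
proof -
  interpret sgraph V A
    using assms(1) by unfold_locales (simp add: SRSG_def)
  have "degree V A x = 3 + 2" and "net_degree V A x = int 3 - int 2" if "x \<in> V" for x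
    using assms(5,6) that by (simp_all add: regular_def net_regular_def)
  then interpret srsg_rook V A 3 2 c
    using assms(1,7) card_pos_neg_eq by unfold_locales (auto simp: SRSG_def)
  have "V \<noteq> {}"
    using assms(1) by (auto simp: SRSG_def edgeless_def)
  then show ?thesis
    using sg_isomorphic_S12 SRSG_S12 by simp
qed

end
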